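(* Consider the distributed detection model in the context with $N\ge 2$, and let $m=\frac{N}{2N-2}$. Suppose the fusion center uses the majority rule $K^*=\lceil\frac{N+1}{2}\rceil$ and that $\alpha<\min\{0.5-P_f,\;1-m/P_d\}$. Then the maximum of the error probability $P_E$ over $(P_{1,0},P_{0,1})\in[0,1]^2$ is attained at one of the attacking strategies $(P_{1,0},P_{0,1})=(1,0)$, $(0,1)$, or $(1,1)$.
   Context: Binary hypothesis test between $H_0$ and $H_1$ with priors $P_0,P_1\in(0,1)$, $P_0+P_1=1$. There are $N$ sensors; conditionally on the hypothesis, their local decisions $v_i\in\{0,1\}$ are i.i.d. with $P(v_i=1\mid H_1)=P_d$, $P(v_i=1\mid H_0)=P_f$, where $0<P_f<P_d<1$. Each sensor independently is Byzantine with probability $\alpha\in[0,1]$. Honest nodes send $u_i=v_i$; a Byzantine node sends $u_i=1$ with probability $P_{1,0}$ when $v_i=0$ and sends $u_i=0$ with probability $P_{0,1}$ when $v_i=1$. Hence conditionally on $H_j$ the $u_i$ are i.i.d. with $P(u_i=1\mid H_0)=\pi_{1,0}=\alpha(P_{1,0}(1-P_f)+(1-P_{0,1})P_f)+(1-\alpha)P_f$ and $P(u_i=1\mid H_1)=\pi_{1,1}=\alpha(P_{1,0}(1-P_d)+(1-P_{0,1})P_d)+(1-\alpha)P_d$. A $K$-out-of-$N$ fusion rule decides $H_1$ iff at least $K$ of the $u_i$ equal $1$; its global false alarm and detection probabilities are $Q_F=\sum_{i=K}^N\binom{N}{i}\pi_{1,0}^i(1-\pi_{1,0})^{N-i}$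 and $Q_D=\sum_{i=K}^N\binom{N}{i}\pi_{1,1}^i(1-\pi_{1,1})^{N-i}$, and its error probability is $P_E=P_0Q_F+P_1(1-Q_D)$, viewed as a function of $(P_{1,0},P_{0,1})$ for fixed $\alpha$ and $K$. *)

theory Defs
  imports Complex_Main
begin

text \<open>Probability that a transmitted bit u_i equals 1 given the local probability
  p = P(v_i = 1 | H_j) (p = P_f under H_0, p = P_d under H_1).\<close>
definition pi1 :: "real \<Rightarrow> real \<Rightarrow> real \<Rightarrow> real \<Rightarrow> real" where
  "pi1 \<alpha> P10 P01 p = \<alpha> * (P10 * (1 - p) + (1 - P01) * p) + (1 - \<alpha>) * p"

definition kofn :: "nat \<Rightarrow> nat \<Rightarrow> real \<Rightarrow> real" where
  "kofn N K q = (\<Sum>i = K..N. real (N choose i) * q ^ i * (1 - q) ^ (N - i))"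

definition QF :: "nat \<Rightarrow> nat \<Rightarrow> real \<Rightarrow> real \<Rightarrow> real \<Rightarrow> real \<Rightarrow> real" where
  "QF N K \<alpha> Pf P10 P01 = kofn N K (pi1 \<alpha> P10 P01 Pf)"

definition QD :: "nat \<Rightarrow> nat \<Rightarrow> real \<Rightarrow> real \<Rightarrow> real \<Rightarrow> real \<Rightarrow> real" where
  "QD N K \<alpha> Pd P10 P01 = kofn N K (pi1 \<alpha> P10 P01 Pd)"

definition PE :: "nat \<Rightarrow> nat \<Rightarrow> real \<Rightarrow> real \<Rightarrow> real \<Rightarrow> real \<Rightarrow> real \<Rightarrow> real \<Rightarrow> real \<Rightarrow> real" where
  "PE N K \<alpha> P0 P1 Pf Pd P10 P01 =
     P0 * QF N K \<alpha> Pf P10 P01 + P1 * (1 - QD N K \<alpha> Pd P10 P01)"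

end

theory Submission
  imports Defs "HOL-Analysis.Analysis"
begin

text \<open>The transmitted-bit probabilities \<open>\<pi>\<^sub>1\<^sub>0\<close>, \<open>\<pi>\<^sub>1\<^sub>1\<close> are affine in the attack
  parameters, and the K-out-of-N curve \<open>q \<mapsto> Q(q)\<close> has derivative proportional to
  \<open>q\<^sup>K\<^sup>-\<^sup>1 (1-q)\<^sup>N\<^sup>-\<^sup>K\<close>, so it is convex below \<open>(K-1)/(N-1)\<close> and concave above. For the
  majority rule this point lies in \<open>[1/2, m]\<close>, and the bound on \<open>\<alpha>\<close> keeps \<open>\<pi>\<^sub>1\<^sub>0\<close> below
  \<open>1/2\<close> and \<open>\<pi>\<^sub>1\<^sub>1\<close> above \<open>m\<close>. Hence \<open>P\<^sub>E = P\<^sub>0 Q(\<pi>\<^sub>1\<^sub>0) + P\<^sub>1 (1 - Q(\<pi>\<^sub>1\<^sub>1))\<close> is jointly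
  convex on the unit square and is maximised at a corner; the corner \<open>(0,0)\<close> is
  dominated by \<open>(1,1)\<close> because the full attack moves both \<open>\<pi>\<close>'s towards \<open>1/2\<close>.\<close>

lemma kofn_has_real_derivative:
  assumes "1 \<le> K" "K \<le> N"
  shows "(kofn N K has_real_derivative
           real N * real ((N-1) choose (K-1)) * q^(K-1) * (1-q)^(N-K)) (at q)"
  using assms(2,1)
proof (induction K rule: inc_induct)
  case base
  have "kofn N N = (\<lambda>q. q^N)" by (rule ext) (simp add: kofn_def)
  then show ?case by (auto intro!: derivative_eq_intros)
next
  case (step n)
  obtain k where k: "n = Suc k" using step by (cases n) auto
  obtain r where r: "N - n = Suc r" using step by (cases "N - n") auto
  have "N - Suc n = r" using r by arith
  then have IH: "(kofn N (Suc n) has_real_derivative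
      real N * real ((N-1) choose n) * q^n * (1-q)^r) (at q)"
    using step by simp
  have split: "kofn N n = (\<lambda>q. real (N choose n) * q^n * (1-q)^Suc r + kofn N (Suc n) q)"
    using step(2) by (intro ext) (simp add: kofn_def sum.atLeast_Suc_atMost r)
  have first_term: "((\<lambda>q. real (N choose n) * q^n * (1-q)^Suc r) has_real_derivative
      real n * real (N choose n) * q^k * (1-q)^Suc r
      - real (Suc r) * real (N choose n) * q^n * (1-q)^r) (at q)"
    by (auto intro!: derivative_eq_intros simp del: power_Suc simp: k algebra_simps)
  have "real n * real (N choose n) = real N * real ((N-1) choose k)"
    using times_binomial_minus1_eq[of n N] k by (metis of_nat_mult diff_Suc_1 zero_less_Suc)
  moreover have "real (Suc r) * real (N choose n) = real N * real ((N-1) choose n)"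
    using binomial_absorb_comp[of N n] r by (metis of_nat_mult)
  ultimately have "(kofn N n has_real_derivative
      real N * real ((N-1) choose k) * q^k * (1-q)^Suc r) (at q)"
    using DERIV_add[OF first_term IH] unfolding split by simp
  moreover have "n - 1 = k" "N - n = Suc r" using k r by simp_all
  ultimately show ?case by simp
qed

lemma kofn_mono:
  assumes "1 \<le> K" "K \<le> N" "0 \<le> x" "x \<le> y" "y \<le> 1"
  shows "kofn N K x \<le> kofn N K y"
proof (rule DERIV_nonneg_imp_nondecreasing[OF \<open>x \<le> y\<close>])
  fix t assume "x \<le> t" "t \<le> y"
  then show "\<exists>d. (kofn N K has_real_derivative d) (at t) \<and> 0 \<le> d"
    using assms kofn_has_real_derivative[OF assms(1,2)] by fastforce
qed

lemma power_one_minus_power_mono: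
  fixes x y :: real
  assumes "0 \<le> x" "x \<le> y" "real (Suc b) * y \<le> real (Suc a) * (1 - y)"
  shows "x^Suc a * (1-x)^Suc b \<le> y^Suc a * (1-y)^Suc b"
proof (rule DERIV_nonneg_imp_nondecreasing[OF assms(2)])
  fix t assume t: "x \<le> t" "t \<le> y"
  have "0 \<le> real (Suc b) * y" using assms by simp
  then have "0 \<le> real (Suc a) * (1 - y)" using assms(3) by linarith
  then have "t \<le> 1" using t by (simp add: zero_le_mult_iff)
  have "real (Suc b) * t \<le> real (Suc b) * y" using t by (intro mult_left_mono) auto
  also have "\<dots> \<le> real (Suc a) * (1 - y)" by fact
  also have "\<dots> \<le> real (Suc a) * (1 - t)" using t by (intro mult_left_mono) auto
  finally have "0 \<le> t^a * (1-t)^b * (real (Suc a) * (1-t) - real (Suc b) * t)"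
    using assms t \<open>t \<le> 1\<close> by (intro mult_nonneg_nonneg) auto
  moreover have "((\<lambda>t. t^Suc a * (1-t)^Suc b) has_real_derivative
      t^a * (1-t)^b * (real (Suc a) * (1-t) - real (Suc b) * t)) (at t)"
    by (auto intro!: derivative_eq_intros simp del: power_Suc) (simp add: algebra_simps)
  ultimately show "\<exists>d. ((\<lambda>t. t^Suc a * (1-t)^Suc b) has_real_derivative d) (at t) \<and> 0 \<le> d"
    by blast
qed

lemma power_one_minus_power_antimono:
  fixes x y :: real
  assumes "real (Suc a) * (1 - x) \<le> real (Suc b) * x" "x \<le> y" "y \<le> 1"
  shows "y^Suc a * (1-y)^Suc b \<le> x^Suc a * (1-x)^Suc b"
proof -
  have "- (x^Suc a * (1-x)^Suc b) \<le> - (y^Suc a * (1-y)^Suc b)"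
  proof (rule DERIV_nonneg_imp_nondecreasing[OF assms(2)])
    fix t assume t: "x \<le> t" "t \<le> y"
    have "0 \<le> x"
    proof (rule ccontr)
      assume "\<not> 0 \<le> x"
      then have "real (Suc b) * x < 0" "0 < real (Suc a) * (1 - x)" by (simp_all add: mult_pos_neg)
      then show False using assms(1) by linarith
    qed
    have "real (Suc a) * (1 - t) \<le> real (Suc a) * (1 - x)" using t by (intro mult_left_mono) auto
    also have "\<dots> \<le> real (Suc b) * x" by fact
    also have "\<dots> \<le> real (Suc b) * t" using t by (intro mult_left_mono) auto
    finally have "0 \<le> t^a * (1-t)^b * (real (Suc b) * t - real (Suc a) * (1-t))"
      using assms t \<open>0 \<le> x\<close> by (intro mult_nonneg_nonneg) auto
    moreover have "((\<lambda>t. - (t^Suc a * (1-t)^Suc b)) has_real_derivative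
        t^a * (1-t)^b * (real (Suc b) * t - real (Suc a) * (1-t))) (at t)"
      by (auto intro!: derivative_eq_intros simp del: power_Suc) (simp add: algebra_simps)
    ultimately show "\<exists>d. ((\<lambda>t. - (t^Suc a * (1-t)^Suc b)) has_real_derivative d) (at t) \<and> 0 \<le> d"
      by blast
  qed
  then show ?thesis by simp
qed

lemma kofn_convex_on:
  assumes "2 \<le> K" "K < N"
  shows "convex_on {0..(real K - 1) / (real N - 1)} (kofn N K)"
proof -
  obtain a b where a: "K - 1 = Suc a" and b: "N - K = Suc b"
    using assms by (intro that[of "K - 2" "N - K - 1"]) arith+
  define c where "c = real N * real ((N-1) choose (K-1))"
  have deriv: "(kofn N K has_real_derivative c * (q^Suc a * (1-q)^Suc b)) (at q)" for q
    using kofn_has_real_derivative[of K N q] assms a b unfolding c_def by (simp add: mult.assoc)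
  show ?thesis
  proof (rule convex_on_realI[OF _ deriv])
    fix x y assume "x \<in> {0..(real K - 1) / (real N - 1)}" "y \<in> {0..(real K - 1) / (real N - 1)}" "x \<le> y"
    moreover have "(real N - 1) * y \<le> real K - 1"
      using calculation assms by (simp add: pos_le_divide_eq mult.commute)
    moreover have ab: "real a = real K - 2" "real b = real N - real K - 1"
      using a b assms by linarith+
    ultimately have "0 \<le> x" "real (Suc b) * y \<le> real (Suc a) * (1 - y)" "x \<le> y"
      by (simp_all add: ab algebra_simps)
    then show "c * (x^Suc a * (1-x)^Suc b) \<le> c * (y^Suc a * (1-y)^Suc b)"
      by (intro mult_left_mono power_one_minus_power_mono) (auto simp: c_def)
  qed simp
qed

lemma kofn_concave_on:
  assumes "2 \<le> K" "K < N"
  shows "convex_on {(real K - 1) / (real N - 1)..1} (\<lambda>q. - kofn N K q)"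
proof -
  obtain a b where a: "K - 1 = Suc a" and b: "N - K = Suc b"
    using assms by (intro that[of "K - 2" "N - K - 1"]) arith+
  define c where "c = real N * real ((N-1) choose (K-1))"
  have deriv: "((\<lambda>q. - kofn N K q) has_real_derivative - (c * (q^Suc a * (1-q)^Suc b))) (at q)" for q
    using DERIV_minus[OF kofn_has_real_derivative[of K N q]] assms a b
    unfolding c_def by (simp add: mult.assoc)
  show ?thesis
  proof (rule convex_on_realI[OF _ deriv])
    fix x y assume "x \<in> {(real K - 1) / (real N - 1)..1}" "y \<in> {(real K - 1) / (real N - 1)..1}" "x \<le> y"
    moreover have "real K - 1 \<le> (real N - 1) * x"
      using calculation assms by (simp add: pos_divide_le_eq mult.commute)
    moreover have ab: "real a = real K - 2" "real b = real N - real K - 1"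
      using a b assms by linarith+
    ultimately have "real (Suc a) * (1 - x) \<le> real (Suc b) * x" "x \<le> y" "y \<le> 1"
      by (simp_all add: ab algebra_simps)
    then show "- (c * (x^Suc a * (1-x)^Suc b)) \<le> - (c * (y^Suc a * (1-y)^Suc b))"
      by (simp only: neg_le_iff_le) (intro mult_left_mono power_one_minus_power_antimono, auto simp: c_def)
  qed simp
qed

lemma pi1_convex_combination:
  "pi1 \<alpha> ((1-t)*x + t*x') ((1-t)*y + t*y') p = (1-t) * pi1 \<alpha> x y p + t * pi1 \<alpha> x' y' p"
  by (simp add: pi1_def algebra_simps)

lemma pi1_bounds:
  assumes "0 \<le> \<alpha>" "\<alpha> \<le> 1" "0 \<le> p" "p \<le> 1" "x \<in> {0..1}" "y \<in> {0..1}"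
  shows "(1 - \<alpha>) * p \<le> pi1 \<alpha> x y p" "pi1 \<alpha> x y p \<le> p + \<alpha> * (1 - p)"
proof -
  have eq: "pi1 \<alpha> x y p = p + \<alpha> * x * (1 - p) - \<alpha> * y * p"
    by (simp add: pi1_def algebra_simps)
  have "\<alpha> * x * (1 - p) \<le> \<alpha> * (1 - p)" "\<alpha> * y * p \<le> \<alpha> * p"
    using assms by (auto intro!: mult_left_mono mult_left_le_one_le simp: mult.assoc)
  moreover have "0 \<le> \<alpha> * x * (1 - p)" "0 \<le> \<alpha> * y * p" using assms by auto
  ultimately show "(1 - \<alpha>) * p \<le> pi1 \<alpha> x y p" "pi1 \<alpha> x y p \<le> p + \<alpha> * (1 - p)"
    unfolding eq by (auto simp: algebra_simps)
qed

lemma PE_convex_on: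
  assumes "2 \<le> K" "K < N" "0 \<le> \<alpha>" "\<alpha> \<le> 1" "0 \<le> P0" "0 \<le> P1"
    and "0 \<le> Pf" "Pf \<le> 1" "0 \<le> Pd" "Pd \<le> 1"
    and "Pf + \<alpha> \<le> (real K - 1) / (real N - 1)" "(real K - 1) / (real N - 1) \<le> (1 - \<alpha>) * Pd"
  shows "convex_on ({0..1} \<times> {0..1}) (\<lambda>s. PE N K \<alpha> P0 P1 Pf Pd (fst s) (snd s))"
proof (rule convex_onI)
  show "convex ({0..1::real} \<times> {0..1::real})" by (simp add: convex_Times)
  define r where "r = (real K - 1) / (real N - 1)"
  have range: "pi1 \<alpha> x y Pf \<in> {0..r}" "pi1 \<alpha> x y Pd \<in> {r..1}" if "x \<in> {0..1}" "y \<in> {0..1}" for x y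
  proof -
    have "0 \<le> (1 - \<alpha>) * Pf" using assms by simp
    moreover have "\<alpha> * (1 - Pf) \<le> \<alpha>" using assms by (intro mult_right_le_one_le) auto
    moreover have "\<alpha> * (1 - Pd) \<le> 1 - Pd" using assms by (intro mult_left_le_one_le) auto
    moreover note pi1_bounds[OF assms(3,4) assms(7,8) that] pi1_bounds[OF assms(3,4) assms(9,10) that]
    ultimately show "pi1 \<alpha> x y Pf \<in> {0..r}" "pi1 \<alpha> x y Pd \<in> {r..1}"
      using assms(11,12) unfolding r_def atLeastAtMost_iff by linarith+
  qed
  fix t :: real and u v :: "real \<times> real"
  assume t: "0 < t" "t < 1" and uv: "u \<in> {0..1} \<times> {0..1}" "v \<in> {0..1} \<times> {0..1}"
  obtain x y x' y' where u: "u = (x, y)" and v: "v = (x', y')" by fastforce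
  have "x \<in> {0..1}" "y \<in> {0..1}" "x' \<in> {0..1}" "y' \<in> {0..1}" using uv u v by auto
  then have H0: "kofn N K ((1-t) * pi1 \<alpha> x y Pf + t * pi1 \<alpha> x' y' Pf)
        \<le> (1-t) * kofn N K (pi1 \<alpha> x y Pf) + t * kofn N K (pi1 \<alpha> x' y' Pf)"
    and H1: "- kofn N K ((1-t) * pi1 \<alpha> x y Pd + t * pi1 \<alpha> x' y' Pd)
        \<le> (1-t) * - kofn N K (pi1 \<alpha> x y Pd) + t * - kofn N K (pi1 \<alpha> x' y' Pd)"
    using convex_onD[OF kofn_convex_on[OF assms(1,2)], of t] convex_onD[OF kofn_concave_on[OF assms(1,2)], of t]
      t range unfolding r_def by auto
  have comb: "fst ((1-t) *\<^sub>R u + t *\<^sub>R v) = (1-t) * x + t * x'"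
      "snd ((1-t) *\<^sub>R u + t *\<^sub>R v) = (1-t) * y + t * y'"
    by (simp_all add: u v)
  show "PE N K \<alpha> P0 P1 Pf Pd (fst ((1-t) *\<^sub>R u + t *\<^sub>R v)) (snd ((1-t) *\<^sub>R u + t *\<^sub>R v))
      \<le> (1-t) * PE N K \<alpha> P0 P1 Pf Pd (fst u) (snd u) + t * PE N K \<alpha> P0 P1 Pf Pd (fst v) (snd v)"
    unfolding comb unfolding u v fst_conv snd_conv PE_def QF_def QD_def pi1_convex_combination
    using mult_left_mono[OF H0 assms(5)] mult_left_mono[OF H1 assms(6)] by (simp add: algebra_simps)
qed

lemma PE_no_attack_le_full_attack:
  assumes "1 \<le> K" "K \<le> N" "0 \<le> \<alpha>" "\<alpha> \<le> 1" "0 \<le> P0" "0 \<le> P1"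
    and "0 \<le> Pf" "Pf \<le> 1/2" "1/2 \<le> Pd" "Pd \<le> 1"
  shows "PE N K \<alpha> P0 P1 Pf Pd 0 0 \<le> PE N K \<alpha> P0 P1 Pf Pd 1 1"
proof -
  have attack: "pi1 \<alpha> 0 0 p = p" "pi1 \<alpha> 1 1 p = p + \<alpha> * (1 - 2 * p)" for p
    by (simp_all add: pi1_def algebra_simps)
  have "Pf + \<alpha> * (1 - 2 * Pf) \<le> Pf + \<alpha> * (1 - Pf)" "(1 - \<alpha>) * Pd \<le> Pd + \<alpha> * (1 - 2 * Pd)"
    using pi1_bounds[OF assms(3,4), of _ 1 1] assms by (simp_all add: attack)
  moreover have "\<alpha> * (1 - Pf) \<le> 1 - Pf" "0 \<le> \<alpha> * (1 - 2 * Pf)"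
      "0 \<le> (1 - \<alpha>) * Pd" "\<alpha> * (1 - 2 * Pd) \<le> 0"
    using assms by (simp_all add: mult_left_le_one_le mult_nonneg_nonpos)
  ultimately have "Pf \<le> Pf + \<alpha> * (1 - 2 * Pf)" "Pf + \<alpha> * (1 - 2 * Pf) \<le> 1"
      "0 \<le> Pd + \<alpha> * (1 - 2 * Pd)" "Pd + \<alpha> * (1 - 2 * Pd) \<le> Pd"
    by linarith+
  then have "kofn N K Pf \<le> kofn N K (Pf + \<alpha> * (1 - 2 * Pf))"
      "kofn N K (Pd + \<alpha> * (1 - 2 * Pd)) \<le> kofn N K Pd"
    using assms by (auto intro!: kofn_mono)
  then have "P0 * kofn N K Pf \<le> P0 * kofn N K (Pf + \<alpha> * (1 - 2 * Pf))"
      "P1 * kofn N K (Pd + \<alpha> * (1 - 2 * Pd)) \<le> P1 * kofn N K Pd"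
    using assms by (simp_all add: mult_left_mono)
  then show ?thesis
    by (simp add: PE_def QF_def QD_def attack algebra_simps)
qed

lemma convex_on_unit_square_max_at_corner:
  fixes G :: "real \<times> real \<Rightarrow> real"
  assumes "convex_on ({0..1} \<times> {0..1}) G" "G (0, 0) \<le> G (1, 1)"
  shows "\<exists>s \<in> {(1, 0), (0, 1), (1, 1)}. \<forall>x \<in> {0..1}. \<forall>y \<in> {0..1}. G (x, y) \<le> G s"
proof -
  define M where "M = max (G (1, 0)) (max (G (0, 1)) (G (1, 1)))"
  have mix: "G ((1-t) *\<^sub>R u + t *\<^sub>R v) \<le> M"
    if "u \<in> {0..1} \<times> {0..1}" "v \<in> {0..1} \<times> {0..1}" "G u \<le> M" "G v \<le> M" "0 \<le> t" "t \<le> 1" for t u v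
  proof -
    have "G ((1-t) *\<^sub>R u + t *\<^sub>R v) \<le> (1-t) * G u + t * G v"
      using convex_onD[OF assms(1)] that by blast
    also have "\<dots> \<le> (1-t) * M + t * M"
      using that by (intro add_mono mult_left_mono) auto
    finally show ?thesis by (simp add: algebra_simps)
  qed
  have "G (x, y) \<le> M" if "x \<in> {0..1}" "y \<in> {0..1}" for x y
  proof -
    have edge: "G (c, y) \<le> M" if "G (c, 0) \<le> M" "G (c, 1) \<le> M" "c \<in> {0..1}" for c
      using mix[of "(c, 0)" "(c, 1)" y] that \<open>y \<in> {0..1}\<close> by (simp add: algebra_simps)
    have "G (0, y) \<le> M" "G (1, y) \<le> M"
      using edge[of 0] edge[of 1] assms(2) by (auto simp: M_def)
    then show ?thesis
      using mix[of "(0, y)" "(1, y)" x] that by (simp add: algebra_simps)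
  qed
  moreover obtain s where "s \<in> {(1, 0), (0, 1), (1, 1)}" "G s = M"
    unfolding M_def by (metis insertCI max_def)
  ultimately show ?thesis by auto
qed

lemma majority_threshold_eq: "nat \<lceil>(real N + 1) / 2\<rceil> = N div 2 + 1"
proof -
  have "real N = 2 * real (N div 2) + real (N mod 2)" "N mod 2 \<le> 1"
    by (metis of_nat_add of_nat_mult of_nat_numeral div_mult_mod_eq add.commute mult.commute) simp
  then have "\<lceil>(real N + 1) / 2\<rceil> = int (N div 2) + 1"
    by (subst ceiling_unique) (auto simp: field_simps)
  then show ?thesis by simp
qed

lemma majority_inflection_bounds:
  assumes "2 \<le> N"
  shows "1/2 \<le> real (N div 2) / (real N - 1)" "real (N div 2) / (real N - 1) \<le> real N / (2 * real N - 2)"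
proof -
  have "real N = 2 * real (N div 2) + real (N mod 2)" "real (N mod 2) \<le> 1"
    by (metis of_nat_add of_nat_mult of_nat_numeral div_mult_mod_eq add.commute mult.commute) simp
  then have "real N - 1 \<le> 2 * real (N div 2)" "2 * real (N div 2) \<le> real N" by linarith+
  moreover have "0 < real N - 1" using assms by simp
  ultimately show "1/2 \<le> real (N div 2) / (real N - 1)" by (simp add: field_simps)
  have "real (N div 2) / (real N - 1) \<le> (real N / 2) / (real N - 1)"
    using \<open>2 * real (N div 2) \<le> real N\<close> \<open>0 < real N - 1\<close> by (intro divide_right_mono) auto
  also have "\<dots> = real N / (2 * real N - 2)" by (simp add: field_simps)
  finally show "real (N div 2) / (real N - 1) \<le> real N / (2 * real N - 2)" .
qed

theorem theorem2:
  fixes N :: nat and \<alpha> P0 P1 Pf Pd :: real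
  assumes "N \<ge> 2"
    and "0 < P0" and "P0 < 1" and "0 < P1" and "P1 < 1" and "P0 + P1 = 1"
    and "0 < Pf" and "Pf < Pd" and "Pd < 1"
    and "0 \<le> \<alpha>" and "\<alpha> \<le> 1"
    and "\<alpha> < min (1/2 - Pf) (1 - (real N / (2 * real N - 2)) / Pd)"
  shows "\<exists>s \<in> {(1, 0), (0, 1), (1, 1)}.
           \<forall>P10 \<in> {0..1}. \<forall>P01 \<in> {0..1}.
             PE N (nat \<lceil>(real N + 1) / 2\<rceil>) \<alpha> P0 P1 Pf Pd P10 P01
               \<le> PE N (nat \<lceil>(real N + 1) / 2\<rceil>) \<alpha> P0 P1 Pf Pd (fst s) (snd s)"
proof -
  define K where "K = nat \<lceil>(real N + 1) / 2\<rceil>"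
  define m where "m = real N / (2 * real N - 2)"
  have K: "K = N div 2 + 1" "real K - 1 = real (N div 2)"
    unfolding K_def majority_threshold_eq by simp_all
  have "\<alpha> * Pd < (1 - m / Pd) * Pd"
    using assms by (intro mult_strict_right_mono) (auto simp: m_def)
  then have m_lt: "m < (1 - \<alpha>) * Pd" using assms by (simp add: algebra_simps)
  have "N \<noteq> 2"
  proof
    assume "N = 2"
    then have "m = 1" by (simp add: m_def)
    moreover have "(1 - \<alpha>) * Pd \<le> 1" using assms by (simp add: mult_le_one)
    ultimately show False using m_lt by linarith
  qed
  then have "2 \<le> K" "K < N" using assms K by auto
  moreover have "1/2 \<le> (real K - 1) / (real N - 1)" "(real K - 1) / (real N - 1) \<le> m"
    using majority_inflection_bounds[OF assms(1)] K unfolding m_def by simp_all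
  moreover have "(1 - \<alpha>) * Pd \<le> Pd" using assms by (simp add: mult_left_le_one_le)
  moreover have "\<alpha> < 1/2 - Pf" using assms(12) by simp
  ultimately have "convex_on ({0..1} \<times> {0..1}) (\<lambda>s. PE N K \<alpha> P0 P1 Pf Pd (fst s) (snd s))"
      "PE N K \<alpha> P0 P1 Pf Pd 0 0 \<le> PE N K \<alpha> P0 P1 Pf Pd 1 1"
    using assms m_lt by (intro PE_convex_on PE_no_attack_le_full_attack; linarith)+
  then show ?thesis
    using convex_on_unit_square_max_at_corner[of "\<lambda>s. PE N K \<alpha> P0 P1 Pf Pd (fst s) (snd s)"]
    unfolding K_def by simp
qed

end
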